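(* Let $n\ge4$ and let $x\in B$ with $|x|=2n+4$ and $\delta(x)=4$. Then $[x]_2\notin R$.
   Context: Stern's sequence $(a(n))_{n\ge0}$: $a(0)=0$, $a(1)=1$, $a(2n)=a(n)$, $a(2n+1)=a(n)+a(n+1)$; $s(n)=a(n+1)$. $R$ is the set of record-setters of $s$, i.e. indices $v\ge0$ with $s(i)<s(v)$ for all $i<v$. For a binary string $x$, $[x]_2$ is the integer it represents in base 2 and $|x|$ its length. $B$ denotes the set of nonempty binary strings that are concatenations of blocks each equal to $10$ or $100$; for $x\in B$, $\delta(x)$ is the number of $0$s minus the number of $1$s in $x$, which equals the number of $100$ blocks. *)

theory Defs
  imports Main
begin

function stern :: "nat \<Rightarrow> nat" where
  "stern 0 = 0"
| "stern (Suc 0) = 1"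
| "stern (Suc (Suc m)) = (if even m then stern (Suc (m div 2))
      else stern (Suc (m div 2)) + stern (Suc (Suc (m div 2))))"
  by pat_completeness auto
termination by (relation "measure id") (auto elim: oddE)

lemma stern_even: "stern (2 * n) = stern n"
proof (cases n)
  case (Suc k)
  then have "2 * n = Suc (Suc (2 * k))" by simp
  then show ?thesis using Suc by simp
qed simp

lemma stern_odd: "stern (2 * n + 1) = stern n + stern (n + 1)"
proof (cases n)
  case (Suc k)
  then have "2 * n + 1 = Suc (Suc (2 * k + 1))" by simp
  then show ?thesis using Suc by simp
qed simp

definition s :: "nat \<Rightarrow> nat" where
  "s n = stern (n + 1)"

definition R :: "nat set" where
  "R = {v. \<forall>i<v. s i < s v}"

text \<open>Binary strings are lists of bits, True = 1, most significant bit first.\<close>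
fun bin_val :: "bool list \<Rightarrow> nat" where
  "bin_val [] = 0"
| "bin_val (b # xs) = (if b then 2 ^ length xs else 0) + bin_val xs"

definition B :: "bool list set" where
  "B = {concat bs | bs. bs \<noteq> [] \<and> (\<forall>b\<in>set bs. b = [True, False] \<or> b = [True, False, False])}"

definition delta :: "bool list \<Rightarrow> int" where
  "delta x = int (length (filter Not x)) - int (length (filter id x))"

end

theory Submission
  imports Defs
begin

text \<open>
Reading a binary string from the left, the pair (a(m), a(m+1)) for its value m evolves by
(p,q) \<mapsto> (p+q, q) on a 1 and (p,q) \<mapsto> (p, p+q) on a 0. The hypotheses force
x = (10)^a 100 (10)^b 100 (10)^c 100 (10)^d 100 (10)^e (the length condition is then
automatic). Put y = (10)^a 1000 (10)^(c+d+e+4) if b = 0 and y = (10)^a 100 100 (10)^(b+c+d+e+3)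
otherwise: y has the same length and a smaller value, but s([y]_2) \<ge> s([x]_2).
A block (10)^k acts by a matrix whose second row (u, w) satisfies 0 \<le> 8u \<le> 5w, so by
bilinearity this comparison reduces to the finitely many cases where each (u, w) is
(0,1) or (5,8).
\<close>

fun stern_step :: "int \<times> int \<Rightarrow> bool \<Rightarrow> int \<times> int" where
  "stern_step (p, q) b = (if b then (p + q, q) else (p, p + q))"

definition stern_run :: "int \<times> int \<Rightarrow> bool list \<Rightarrow> int \<times> int" where
  "stern_run v xs = foldl stern_step v xs"

lemma stern_run_Nil [simp]: "stern_run v [] = v"
  by (simp add: stern_run_def)

lemma stern_run_Cons: "stern_run (p, q) (b # xs) = stern_run (stern_step (p, q) b) xs"
  by (simp add: stern_run_def)

lemma stern_run_append: "stern_run v (xs @ ys) = stern_run (stern_run v xs) ys"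
  by (simp add: stern_run_def)

lemma stern_run_linear:
  "\<exists>a1 a2 b1 b2. \<forall>p q. stern_run (p, q) S = (p * a1 + q * a2, p * b1 + q * b2)"
proof (induction S)
  case Nil
  show ?case by (intro exI[of _ 1] exI[of _ 0] exI[of _ 0] exI[of _ 1]) simp
next
  case (Cons b S)
  then obtain a1 a2 b1 b2
    where IH: "\<And>p q. stern_run (p, q) S = (p * a1 + q * a2, p * b1 + q * b2)" by blast
  show ?case
  proof (cases b)
    case True
    then show ?thesis
      by (intro exI[of _ a1] exI[of _ "a1 + a2"] exI[of _ b1] exI[of _ "b1 + b2"])
        (simp add: stern_run_Cons IH algebra_simps)
  next
    case False
    then show ?thesis
      by (intro exI[of _ "a1 + a2"] exI[of _ a2] exI[of _ "b1 + b2"] exI[of _ b2])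
        (simp add: stern_run_Cons IH algebra_simps)
  qed
qed

lemma bin_val_snoc: "bin_val (xs @ [b]) = 2 * bin_val xs + (if b then 1 else 0)"
  by (induction xs) auto

lemma bin_val_append: "bin_val (xs @ ys) = bin_val xs * 2 ^ length ys + bin_val ys"
  by (induction xs) (auto simp: power_add algebra_simps)

lemma bin_val_less_two_power: "bin_val xs < 2 ^ length xs"
  by (induction xs) auto

lemma bin_val_less_first_difference:
  assumes "length r1 = length r2"
  shows "bin_val (P @ False # r1) < bin_val (P @ True # r2)"
  using assms bin_val_less_two_power[of r1] by (simp add: bin_val_append)

lemma stern_run_bin_val:
  "stern_run (0, 1) xs = (int (stern (bin_val xs)), int (stern (bin_val xs + 1)))"
proof (induction xs rule: rev_induct)
  case Nil
  then show ?case by simp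
next
  case (snoc b xs)
  define m where "m = bin_val xs"
  have "stern (2 * m + 2) = stern (m + 1)"
    using stern_even[of "m + 1"] by (simp add: algebra_simps)
  then show ?case
    using snoc stern_odd[of m] stern_even[of m]
    by (simp add: bin_val_snoc m_def[symmetric] stern_run_append stern_run_Cons add.commute)
qed

lemma s_bin_val: "int (s (bin_val xs)) = snd (stern_run (0, 1) xs)"
  by (simp add: s_def stern_run_bin_val)

lemma not_in_R_if_earlier_ge: "i < v \<Longrightarrow> s v \<le> s i \<Longrightarrow> v \<notin> R"
  by (auto simp: R_def)

definition blk10 :: "bool list" where "blk10 = [True, False]"
definition blk100 :: "bool list" where "blk100 = [True, False, False]"

definition rep10 :: "nat \<Rightarrow> bool list" where
  "rep10 k = concat (replicate k blk10)"

lemma rep10_0 [simp]: "rep10 0 = []"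
  by (simp add: rep10_def)

lemma rep10_Suc: "rep10 (Suc k) = True # False # rep10 k"
  by (simp add: rep10_def blk10_def)

lemma length_rep10 [simp]: "length (rep10 k) = 2 * k"
  by (induction k) (auto simp: rep10_Suc)

lemma rep10_4: "rep10 4 = [True, False, True, False, True, False, True, False]"
  by (simp add: numeral_eq_Suc rep10_Suc)

definition rep10_vec :: "nat \<Rightarrow> int \<times> int" where
  "rep10_vec k = stern_run (0, 1) (rep10 k)"

text \<open>(10)^k acts as the symmetric matrix with rows (y - x, x) and (x, y), where
  (x, y) = rep10_vec k; rep10_act applies that matrix, given its second row.\<close>
definition rep10_act :: "int \<times> int \<Rightarrow> int \<times> int \<Rightarrow> int \<times> int" where
  "rep10_act v w = (fst v * (snd w - fst w) + snd v * fst w, fst v * fst w + snd v * snd w)"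

lemma rep10_act_0_1: "rep10_act v (0, 1) = v"
  by (simp add: rep10_act_def)

lemma rep10_act_5_8: "rep10_act (p, q) (5, 8) = (3 * p + 5 * q, 5 * p + 8 * q)"
  by (simp add: rep10_act_def)

lemma stern_run_rep10: "stern_run v (rep10 k) = rep10_act v (rep10_vec k)"
proof (induction k arbitrary: v)
  case 0
  then show ?case by (simp add: rep10_vec_def rep10_act_def)
next
  case (Suc k)
  have "rep10_vec (Suc k) = stern_run (1, 2) (rep10 k)"
    by (simp add: rep10_vec_def rep10_Suc stern_run_Cons)
  then show ?case
    using Suc.IH by (cases v) (simp add: rep10_Suc rep10_act_def stern_run_Cons algebra_simps)
qed

lemma stern_run_rep10_append:
  "stern_run v (rep10 k @ S) = stern_run (rep10_act v (rep10_vec k)) S"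
  by (simp add: stern_run_append stern_run_rep10)

lemma rep10_vec_cone: "0 \<le> fst (rep10_vec k) \<and> 8 * fst (rep10_vec k) \<le> 5 * snd (rep10_vec k)"
proof (induction k)
  case 0
  then show ?case by (simp add: rep10_vec_def)
next
  case (Suc k)
  have "rep10_vec (Suc k) = rep10_act (1, 2) (rep10_vec k)"
    unfolding stern_run_rep10[of "(1, 2)" k, symmetric]
    by (simp add: rep10_vec_def rep10_Suc stern_run_Cons)
  with Suc show ?case by (simp add: rep10_act_def)
qed

lemma rep10_act_cone_combination:
  "5 * snd (stern_run (rep10_act v (x, y)) S)
    = (5 * y - 8 * x) * snd (stern_run (rep10_act v (0, 1)) S)
      + x * snd (stern_run (rep10_act v (5, 8)) S)"
proof -
  obtain a1 a2 b1 b2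
    where "\<And>p q. stern_run (p, q) S = (p * a1 + q * a2, p * b1 + q * b2)"
    using stern_run_linear by blast
  then show ?thesis by (cases v) (simp add: rep10_act_def algebra_simps)
qed

lemma rep10_act_compare:
  assumes "snd (stern_run (rep10_act v (0, 1)) S) \<le> snd (stern_run (rep10_act v' (0, 1)) S')"
    and "snd (stern_run (rep10_act v (5, 8)) S) \<le> snd (stern_run (rep10_act v' (5, 8)) S')"
  shows "snd (stern_run (rep10_act v (rep10_vec k)) S) \<le> snd (stern_run (rep10_act v' (rep10_vec k)) S')"
proof -
  obtain x y where xy: "rep10_vec k = (x, y)" by fastforce
  have "0 \<le> x" and "0 \<le> 5 * y - 8 * x" using rep10_vec_cone[of k] xy by auto
  then have "(5 * y - 8 * x) * snd (stern_run (rep10_act v (0, 1)) S)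
      + x * snd (stern_run (rep10_act v (5, 8)) S)
    \<le> (5 * y - 8 * x) * snd (stern_run (rep10_act v' (0, 1)) S')
      + x * snd (stern_run (rep10_act v' (5, 8)) S')"
    using assms by (intro add_mono mult_left_mono)
  then show ?thesis
    unfolding xy rep10_act_cone_combination[symmetric] by simp
qed

lemma rep10_act_compare_Nil:
  assumes "snd (rep10_act v (0, 1)) \<le> snd (stern_run (rep10_act v' (0, 1)) S')"
    and "snd (rep10_act v (5, 8)) \<le> snd (stern_run (rep10_act v' (5, 8)) S')"
  shows "snd (rep10_act v (rep10_vec k)) \<le> snd (stern_run (rep10_act v' (rep10_vec k)) S')"
  using rep10_act_compare[of v "[]" v' S' k] assms by simp

text \<open>The (10)-blocks are eliminated one at a time by the cone comparison, leaving 32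
  numeric inequalities. The block rules are restricted to literal pairs so that the simplifier
  consumes a block only after the prefix before it has been evaluated, keeping the goals in the
  shape of rep10_act_compare.\<close>
lemma stern_run_compare_gap_Suc:
  "snd (stern_run (0, 1) (rep10 a @ blk100 @ blk10 @ rep10 b @ blk100 @ rep10 c @ blk100
        @ rep10 d @ blk100 @ rep10 e))
   \<le> snd (stern_run (0, 1) (rep10 a @ blk100 @ blk100 @ rep10 b @ rep10 c @ rep10 d @ rep10 e
        @ rep10 4))"
  unfolding rep10_4 stern_run_rep10_append
  by (rule rep10_act_compare rep10_act_compare_Nil;
      simp add: blk10_def blk100_def stern_run_Cons rep10_act_0_1 rep10_act_5_8
        stern_run_rep10_append[where v = "(p, q)" for p q]
        stern_run_rep10[where v = "(p, q)" for p q])+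

lemma stern_run_compare_gap_0:
  "snd (stern_run (0, 1) (rep10 a @ blk100 @ blk100 @ rep10 c @ blk100 @ rep10 d @ blk100 @ rep10 e))
   \<le> snd (stern_run (0, 1) (rep10 a @ [True, False, False, False] @ rep10 c @ rep10 d @ rep10 e
        @ rep10 4))"
  unfolding rep10_4 stern_run_rep10_append
  by (rule rep10_act_compare rep10_act_compare_Nil;
      simp add: blk10_def blk100_def stern_run_Cons rep10_act_0_1 rep10_act_5_8
        stern_run_rep10_append[where v = "(p, q)" for p q]
        stern_run_rep10[where v = "(p, q)" for p q])+

lemma delta_concat_blocks:
  "set bs \<subseteq> {blk10, blk100} \<Longrightarrow> delta (concat bs) = int (count_list bs blk100)"
  by (induction bs) (auto simp: delta_def blk10_def blk100_def)

lemma concat_blocks_split_first_blk100: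
  assumes "set bs \<subseteq> {blk10, blk100}" and "count_list bs blk100 = Suc k"
  shows "\<exists>a rest. concat bs = rep10 a @ blk100 @ concat rest
    \<and> set rest \<subseteq> {blk10, blk100} \<and> count_list rest blk100 = k"
  using assms
proof (induction bs)
  case Nil
  then show ?case by simp
next
  case (Cons b bs)
  show ?case
  proof (cases "b = blk100")
    case True
    then show ?thesis
      using Cons.prems by (intro exI[of _ 0] exI[of _ bs]) auto
  next
    case False
    then have "b = blk10" and "count_list bs blk100 = Suc k"
      using Cons.prems by auto
    with Cons obtain a rest where "concat bs = rep10 a @ blk100 @ concat rest"
      and "set rest \<subseteq> {blk10, blk100}" and "count_list rest blk100 = k"
      by auto
    with \<open>b = blk10\<close> show ?thesis
      by (intro exI[of _ "Suc a"] exI[of _ rest]) (simp add: rep10_Suc blk10_def)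
  qed
qed

lemma concat_blocks_without_blk100:
  "set bs \<subseteq> {blk10, blk100} \<Longrightarrow> count_list bs blk100 = 0 \<Longrightarrow> concat bs = rep10 (length bs)"
  by (induction bs) (auto simp: rep10_Suc blk10_def split: if_splits)

lemma B_delta_4_shape:
  assumes "x \<in> B" and "delta x = 4"
  obtains a b c d e where
    "x = rep10 a @ blk100 @ rep10 b @ blk100 @ rep10 c @ blk100 @ rep10 d @ blk100 @ rep10 e"
proof -
  obtain bs where x: "x = concat bs" and blocks: "set bs \<subseteq> {blk10, blk100}"
    using assms(1) by (auto simp: B_def blk10_def blk100_def)
  have "count_list bs blk100 = Suc (Suc (Suc (Suc 0)))"
    using delta_concat_blocks[OF blocks] assms(2) x by simp
  then obtain a bs1 where "concat bs = rep10 a @ blk100 @ concat bs1"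
      and "set bs1 \<subseteq> {blk10, blk100}" and "count_list bs1 blk100 = Suc (Suc (Suc 0))"
    using concat_blocks_split_first_blk100 blocks by blast
  then obtain b bs2 where "concat bs1 = rep10 b @ blk100 @ concat bs2"
      and "set bs2 \<subseteq> {blk10, blk100}" and "count_list bs2 blk100 = Suc (Suc 0)"
    using concat_blocks_split_first_blk100 by blast
  then obtain c bs3 where "concat bs2 = rep10 c @ blk100 @ concat bs3"
      and "set bs3 \<subseteq> {blk10, blk100}" and "count_list bs3 blk100 = Suc 0"
    using concat_blocks_split_first_blk100 by blast
  then obtain d bs4 where "concat bs3 = rep10 d @ blk100 @ concat bs4"
      and "set bs4 \<subseteq> {blk10, blk100}" and "count_list bs4 blk100 = 0"
    using concat_blocks_split_first_blk100 by blast
  then have "concat bs4 = rep10 (length bs4)"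
    using concat_blocks_without_blk100 by blast
  then show ?thesis
    using that x \<open>concat bs = _\<close> \<open>concat bs1 = _\<close> \<open>concat bs2 = _\<close> \<open>concat bs3 = _\<close>
    by simp
qed

lemma bin_val_not_in_R_gap_0:
  "bin_val (rep10 a @ blk100 @ blk100 @ rep10 c @ blk100 @ rep10 d @ blk100 @ rep10 e) \<notin> R"
  (is "bin_val ?x \<notin> R")
proof -
  define y where
    "y = rep10 a @ [True, False, False, False] @ rep10 c @ rep10 d @ rep10 e @ rep10 4"
  have "int (s (bin_val ?x)) \<le> int (s (bin_val y))"
    unfolding s_bin_val y_def by (rule stern_run_compare_gap_0)
  moreover have "bin_val y < bin_val ?x"
  proof -
    have "y = (rep10 a @ [True, False, False]) @ False # (rep10 c @ rep10 d @ rep10 e @ rep10 4)"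
      by (simp add: y_def)
    moreover have "?x = (rep10 a @ [True, False, False]) @ True
        # (False # False # rep10 c @ blk100 @ rep10 d @ blk100 @ rep10 e)"
      by (simp add: blk100_def)
    ultimately show ?thesis
      by (simp only:) (rule bin_val_less_first_difference, simp add: blk100_def)
  qed
  ultimately show ?thesis
    by (intro not_in_R_if_earlier_ge) simp_all
qed

lemma bin_val_not_in_R_gap_Suc:
  "bin_val (rep10 a @ blk100 @ blk10 @ rep10 b @ blk100 @ rep10 c @ blk100 @ rep10 d @ blk100
      @ rep10 e) \<notin> R"
  (is "bin_val ?x \<notin> R")
proof -
  define y where
    "y = rep10 a @ blk100 @ blk100 @ rep10 b @ rep10 c @ rep10 d @ rep10 e @ rep10 4"
  have "int (s (bin_val ?x)) \<le> int (s (bin_val y))"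
    unfolding s_bin_val y_def by (rule stern_run_compare_gap_Suc)
  moreover have "bin_val y < bin_val ?x"
  proof -
    obtain r where r: "rep10 b @ blk100 @ rep10 c @ blk100 @ rep10 d @ blk100 @ rep10 e = True # r"
      by (cases b) (simp_all add: rep10_Suc blk100_def)
    have "y = (rep10 a @ [True, False, False, True, False])
        @ False # (rep10 b @ rep10 c @ rep10 d @ rep10 e @ rep10 4)"
      by (simp add: y_def blk100_def)
    moreover have "?x = (rep10 a @ [True, False, False, True, False]) @ True # r"
      by (simp add: r[symmetric] blk10_def blk100_def)
    moreover have "length r = 2 * b + 2 * c + 2 * d + 2 * e + 8"
      using arg_cong[OF r, of length] by (simp add: blk100_def)
    ultimately show ?thesis
      by (simp only:) (rule bin_val_less_first_difference, simp)
  qed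
  ultimately show ?thesis
    by (intro not_in_R_if_earlier_ge) simp_all
qed

theorem mainTheorem13:
  fixes n :: nat and x :: "bool list"
  assumes "n \<ge> 4" and "x \<in> B" and "length x = 2 * n + 4" and "delta x = 4"
  shows "bin_val x \<notin> R"
proof -
  obtain a b c d e where
    x: "x = rep10 a @ blk100 @ rep10 b @ blk100 @ rep10 c @ blk100 @ rep10 d @ blk100 @ rep10 e"
    using B_delta_4_shape assms(2,4) .
  show ?thesis
  proof (cases b)
    case 0
    then show ?thesis
      using bin_val_not_in_R_gap_0[of a c d e] by (simp add: x)
  next
    case (Suc b')
    then have "rep10 b = blk10 @ rep10 b'"
      by (simp add: rep10_Suc blk10_def)
    then show ?thesis
      using bin_val_not_in_R_gap_Suc[of a b' c d e] by (simp add: x)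
  qed
qed

end
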